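(* Let $N,\nu,M$ be positive integers and $A$ an $N\times N$ complex matrix with $A_{ij}=|A_{ij}|e^{i\varphi(i,j)}$ ($\varphi$ real). Let $S_1,\dots,S_\nu\subseteq[1,N]\times[1,N]$ be pairwise disjoint with union $[1,N]\times[1,N]$, and for $(i,j)$ let $k(i,j)$ be the $k$ with $(i,j)\in S_k$. Suppose there are positive integers $d_k,d'_k$ with $\#\{i:(i,j)\in S_k\}=d_k$ for all $j$ and $\#\{j:(i,j)\in S_k\}=d'_k$ for all $i$, and reals $g_k\ge0$ with $|A_{ij}|\le g_k$ for all $(i,j)\in S_k$, such that $\alpha_{\mathrm{zig}}:=\sum_{k=1}^\nu\sqrt{d_kd'_k}\,g_k>0$. Let $U$ be the circuit described in the context. Then for every $|\Psi\rangle=\sum_j\psi_j|j\rangle$, $$(\langle0|_{\mathrm{anc}}\otimes I_{R_2})\,U\,(|0\rangle_{\mathrm{anc}}\otimes|\Psi\rangle)=\frac{\tilde A}{\alpha_{\mathrm{zig}}}|\Psi\rangle,\quad\tilde A_{ij}=e^{i\varphi(i,j)}\frac{g_{k(i,j)}c_{ij}}{M},$$ with $c_{ij}=\#\{m\in\{1,\dots,M\}:m\,g_{k(i,j)}\le M|A_{ij}|\}$. Consequently $|\tilde A_{ij}-A_{ij}|\le g_{k(i,j)}/M$, and $U$ block-encodes $A$ with rescaling factor $\alpha_{\mathrm{zig}}$ (up to this rounding).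
   Context: States: $|\chi_j\rangle=\alpha_{\mathrm{zig}}^{-1/2}\sum_{k=1}^\nu\sum_{i:(i,j)\in S_k}(d'_k/d_k)^{1/4}\sqrt{g_k}\,|k\rangle|i\rangle$ and $|\phi_i\rangle=\alpha_{\mathrm{zig}}^{-1/2}\sum_{k=1}^\nu\sum_{j:(i,j)\in S_k}(d_k/d'_k)^{1/4}\sqrt{g_k}\,|k\rangle|j\rangle$ (both normalized). Registers: flag qubit $F$; sampling register $\mathrm{Sm}$ with orthonormal states $|0\rangle,\dots,|M\rangle$; value registers $V_A,V_G$ (exact reals, initial $|0\rangle$); label register $K$ with states $|0\rangle,|1\rangle,\dots,|\nu\rangle$; index registers $R_1,R_2$ with states $|0\rangle,|1\rangle,\dots,|N\rangle$; $|0\rangle_{\mathrm{anc}}$ is the all-$|0\rangle$ state of $F,\mathrm{Sm},V_A,V_G,K,R_1$. Unitaries: $\mathrm{PREP}_\chi|0\rangle_K|0\rangle_{R_1}|j\rangle_{R_2}=|\chi_j\rangle|j\rangle$; $\mathrm{PREP}_\phi|0\rangle_K|0\rangle_{R_1}|i\rangle_{R_2}=|\phi_i\rangle|i\rangle$; $\mathrm{USP}_M|0\rangle=\frac1{\sqrt M}\sum_{m=1}^M|m\rangle$; $U_A:|i\rangle_{R_1}|j\rangle_{R_2}|0\rangle_{V_A}\mapsto|i\rangle|j\rangle|\,|A_{ij}|\,\rangle$; $U_G:|k\rangle_K|0\rangle_{V_G}\mapsto|k\rangle|g_k\rangle$; $\mathrm{Comp}$ on $(\mathrm{Sm},V_A,V_G,F)$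 keeps $F=|0\rangle$ for $|m\rangle|a\rangle|b\rangle$ with $Ma\ge bm$ and sets $F=|1\rangle$ otherwise; $\mathrm{PHASE}_\varphi:|i\rangle|j\rangle\mapsto e^{i\varphi(i,j)}|i\rangle|j\rangle$ on $(R_1,R_2)$; $\mathrm{SWAP}$ exchanges $R_1,R_2$. Circuit $U$ in order: $\mathrm{PREP}_\chi$ and $\mathrm{USP}_M$; $U_G$, $U_A$; $\mathrm{Comp}$, $\mathrm{PHASE}_\varphi$; $U_A^\dagger$, $U_G^\dagger$; $\mathrm{SWAP}$; $\mathrm{USP}_M^\dagger$ and $\mathrm{PREP}_\phi^\dagger$. *)

theory Defs
  imports Complex_Main
begin

text \<open>Computational basis configurations of all registers:
  flag F, sampling register Sm, value registers V_A, V_G (exact reals),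
  label register K, index registers R_1, R_2.\<close>
record cfg =
  regF  :: bool
  regSm :: nat
  regVA :: real
  regVG :: real
  regK  :: nat
  regR1 :: nat
  regR2 :: nat

text \<open>State vectors are finitely supported amplitude functions on basis configurations.\<close>
type_synonym qstate = "cfg \<Rightarrow> complex"

definition ket :: "cfg \<Rightarrow> qstate" where
  "ket c = (\<lambda>x. if x = c then 1 else 0)"

definition fsupp :: "qstate \<Rightarrow> bool" where
  "fsupp v \<longleftrightarrow> finite {x. v x \<noteq> 0}"

definition braket :: "qstate \<Rightarrow> qstate \<Rightarrow> complex" where
  "braket v w = (\<Sum>x\<in>{x. v x \<noteq> 0}. cnj (v x) * w x)"

definition unitary_pair :: "(qstate \<Rightarrow> qstate) \<Rightarrow> (qstate \<Rightarrow> qstate) \<Rightarrow> bool" where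
  "unitary_pair U Ud \<longleftrightarrow>
     (\<forall>v. fsupp v \<longrightarrow> fsupp (U v) \<and> fsupp (Ud v) \<and> Ud (U v) = v \<and> U (Ud v) = v) \<and>
     (\<forall>v w. fsupp v \<longrightarrow> fsupp w \<longrightarrow> braket (U v) (U w) = braket v w) \<and>
     (\<forall>a v w. fsupp v \<longrightarrow> fsupp w \<longrightarrow>
        U (\<lambda>x. a * v x + w x) = (\<lambda>x. a * U v x + U w x))"

definition unitary_op :: "(qstate \<Rightarrow> qstate) \<Rightarrow> bool" where
  "unitary_op U \<longleftrightarrow> (\<exists>Ud. unitary_pair U Ud)"

text \<open>U acts only on the registers (K,R_1), controlled by R_2: on every basis input it
  leaves all registers other than K and R_1 unchanged.\<close>
definition acts_on_K_R1 :: "(qstate \<Rightarrow> qstate) \<Rightarrow> bool" where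
  "acts_on_K_R1 U \<longleftrightarrow>
     (\<forall>c x. U (ket c) x \<noteq> 0 \<longrightarrow> x = c\<lparr>regK := regK x, regR1 := regR1 x\<rparr>)"

definition PHASE :: "(nat \<Rightarrow> nat \<Rightarrow> real) \<Rightarrow> qstate \<Rightarrow> qstate" where
  "PHASE \<phi> v = (\<lambda>c. exp (\<i> * complex_of_real (\<phi> (regR1 c) (regR2 c))) * v c)"

definition SWAP :: "qstate \<Rightarrow> qstate" where
  "SWAP v = (\<lambda>c. v (c\<lparr>regR1 := regR2 c, regR2 := regR1 c\<rparr>))"

definition anc0 :: "nat \<Rightarrow> cfg" where
  "anc0 j = \<lparr>regF = False, regSm = 0, regVA = 0, regVG = 0, regK = 0, regR1 = 0, regR2 = j\<rparr>"

definition input_state :: "(nat \<Rightarrow> complex) \<Rightarrow> qstate" where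
  "input_state \<psi> = (\<lambda>c. if (\<exists>j. c = anc0 j) then \<psi> (regR2 c) else 0)"

definition kidx :: "(nat \<Rightarrow> (nat \<times> nat) set) \<Rightarrow> nat \<Rightarrow> nat \<Rightarrow> nat \<Rightarrow> nat" where
  "kidx S \<nu> i j = (THE k. k \<in> {1..\<nu>} \<and> (i, j) \<in> S k)"

definition cnt :: "nat \<Rightarrow> real \<Rightarrow> real \<Rightarrow> nat" where
  "cnt M gk a = card {m \<in> {1..M}. real m * gk \<le> real M * a}"

definition Atilde ::
  "nat \<Rightarrow> (nat \<Rightarrow> (nat \<times> nat) set) \<Rightarrow> (nat \<Rightarrow> real) \<Rightarrow> (nat \<Rightarrow> nat \<Rightarrow> complex)
     \<Rightarrow> (nat \<Rightarrow> nat \<Rightarrow> real) \<Rightarrow> nat \<Rightarrow> nat \<Rightarrow> nat \<Rightarrow> complex" where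
  "Atilde \<nu> S g A \<phi> M i j =
     exp (\<i> * complex_of_real (\<phi> i j)) *
     complex_of_real (g (kidx S \<nu> i j) * real (cnt M (g (kidx S \<nu> i j)) (cmod (A i j))) / real M)"

end

theory Submission
  imports Defs
begin

text \<open>Every stage of the circuit sends a computational basis state to an explicit finite
  superposition of basis states, so the state just before the uncomputation of U_A and U_G is a
  superposition over the branches (j, k, i, m) with (i, j) in S_k and m in [1, M], whose flag is
  0 exactly when m g_k \<le> M |A_ij|. The flag survives the uncomputation, which clears the value
  registers. The remaining adjoints are evaluated through (U\<dagger> w)(x) = \<langle>U x, w\<rangle>:
  projecting onto |0>_anc |i> pairs the branch (k, j) of |\<phi>_i> with the branch (j, k, i) of
  |\<chi>_j>, the two amplitudes multiply to g_k / \<alpha>, the two sampling superpositions contribute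
  1/M, and summing over the unflagged m counts c_ij. The entrywise error is a rounding error,
  since c_ij = \<lfloor>M |A_ij| / g_k\<rfloor>.\<close>

section \<open>Finite superpositions of basis states\<close>

abbreviation conf :: "bool \<Rightarrow> nat \<Rightarrow> real \<Rightarrow> real \<Rightarrow> nat \<Rightarrow> nat \<Rightarrow> nat \<Rightarrow> cfg" where
  "conf F m va vg k r1 r2 \<equiv>
     \<lparr>regF = F, regSm = m, regVA = va, regVG = vg, regK = k, regR1 = r1, regR2 = r2\<rparr>"

definition superpos :: "'i set \<Rightarrow> ('i \<Rightarrow> complex) \<Rightarrow> ('i \<Rightarrow> cfg) \<Rightarrow> qstate" where
  "superpos I f c = (\<lambda>x. \<Sum>t\<in>I. f t * ket (c t) x)"

lemma superpos_apply: "finite I \<Longrightarrow> superpos I f c x = (\<Sum>t | t \<in> I \<and> c t = x. f t)"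
  by (simp add: superpos_def ket_def sum.inter_filter eq_commute if_distrib cong: if_cong)

lemma superpos_eq_0: "x \<notin> c ` I \<Longrightarrow> superpos I f c x = 0"
  unfolding superpos_def ket_def by (rule sum.neutral) auto

lemma superpos_cong:
  "I = I' \<Longrightarrow> (\<And>t. t \<in> I \<Longrightarrow> f t = f' t) \<Longrightarrow> (\<And>t. t \<in> I \<Longrightarrow> c t = c' t) \<Longrightarrow>
   superpos I f c = superpos I' f' c'"
  unfolding superpos_def by (intro ext sum.cong) auto

lemma fsupp_ket: "fsupp (ket c)"
proof -
  have "{x. ket c x \<noteq> 0} = {c}" by (simp add: ket_def)
  then show ?thesis by (simp add: fsupp_def)
qed

lemma fsupp_superpos:
  assumes "finite I"
  shows "fsupp (superpos I f c)"
proof -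
  have "{x. superpos I f c x \<noteq> 0} \<subseteq> c ` I" using superpos_eq_0 by blast
  then show ?thesis unfolding fsupp_def using assms finite_surj by blast
qed

definition swap_regs :: "cfg \<Rightarrow> cfg" where
  "swap_regs c = c\<lparr>regR1 := regR2 c, regR2 := regR1 c\<rparr>"

lemma swap_regs_swap_regs [simp]: "swap_regs (swap_regs c) = c"
  by (simp add: swap_regs_def)

lemma SWAP_apply: "SWAP v x = v (swap_regs x)"
  by (simp add: SWAP_def swap_regs_def)

lemma fsupp_SWAP:
  assumes "fsupp v"
  shows "fsupp (SWAP v)"
proof -
  have "{x. SWAP v x \<noteq> 0} = swap_regs ` {x. v x \<noteq> 0}"
    by (auto simp: SWAP_apply image_iff) (metis swap_regs_swap_regs)
  then show ?thesis using assms by (simp add: fsupp_def)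
qed

lemma braket_ket: "braket (ket c) v = v c"
proof -
  have "{x. ket c x \<noteq> 0} = {c}" by (auto simp: ket_def)
  then show ?thesis by (simp add: braket_def ket_def)
qed

lemma braket_superpos:
  assumes "finite I"
  shows "braket (superpos I f c) w = (\<Sum>t\<in>I. cnj (f t) * w (c t))"
proof -
  have "braket (superpos I f c) w = (\<Sum>x\<in>c ` I. cnj (superpos I f c x) * w x)"
    unfolding braket_def
    using superpos_eq_0[of _ c I f] by (intro sum.mono_neutral_left) (auto simp: assms)
  also have "\<dots> = (\<Sum>x\<in>c ` I. \<Sum>t\<in>I. if c t = x then cnj (f t) * w x else 0)"
    by (auto simp: superpos_def ket_def sum_distrib_right intro!: sum.cong)
  also have "\<dots> = (\<Sum>t\<in>I. cnj (f t) * w (c t))"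
    by (subst sum.swap) (simp add: assms)
  finally show ?thesis .
qed

lemma PHASE_superpos:
  "PHASE \<phi> (superpos I f c) =
   superpos I (\<lambda>t. exp (\<i> * complex_of_real (\<phi> (regR1 (c t)) (regR2 (c t)))) * f t) c"
  unfolding PHASE_def superpos_def ket_def
  by (auto simp: sum_distrib_left intro!: sum.cong)

lemma unitary_pairD:
  assumes "unitary_pair U Ud" "fsupp v"
  shows "fsupp (U v)" "fsupp (Ud v)" "Ud (U v) = v" "U (Ud v) = v"
  using assms unfolding unitary_pair_def by blast+

lemma unitary_pair_braket:
  "unitary_pair U Ud \<Longrightarrow> fsupp v \<Longrightarrow> fsupp w \<Longrightarrow> braket (U v) (U w) = braket v w"
  unfolding unitary_pair_def by blast

lemma unitary_pair_linear:
  "unitary_pair U Ud \<Longrightarrow> fsupp v \<Longrightarrow> fsupp w \<Longrightarrow>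
   U (\<lambda>x. a * v x + w x) = (\<lambda>x. a * U v x + U w x)"
  unfolding unitary_pair_def by blast

lemma unitary_pair_zero:
  assumes "unitary_pair U Ud"
  shows "U (\<lambda>x. 0) = (\<lambda>x. 0)"
proof -
  have fsupp_0: "fsupp (\<lambda>x. 0)" by (simp add: fsupp_def)
  have "U (\<lambda>x. 0) = U (\<lambda>x. 1 * 0 + 0)" by simp
  also have "\<dots> = (\<lambda>x. 1 * U (\<lambda>x. 0) x + U (\<lambda>x. 0) x)"
    by (rule unitary_pair_linear[OF assms fsupp_0 fsupp_0])
  finally have "\<And>x. U (\<lambda>x. 0) x = U (\<lambda>x. 0) x + U (\<lambda>x. 0) x" by (metis mult_1)
  then show ?thesis by auto
qed

lemma unitary_pair_superpos:
  assumes U: "unitary_pair U Ud" and "finite I"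
  shows "U (superpos I f c) = (\<lambda>x. \<Sum>t\<in>I. f t * U (ket (c t)) x)"
  using \<open>finite I\<close>
proof (induction I rule: finite_induct)
  case empty
  show ?case by (simp add: superpos_def unitary_pair_zero[OF U])
next
  case (insert t I)
  then have "U (superpos (insert t I) f c) = U (\<lambda>x. f t * ket (c t) x + superpos I f c x)"
    by (simp add: superpos_def)
  also have "\<dots> = (\<lambda>x. f t * U (ket (c t)) x + U (superpos I f c) x)"
    by (rule unitary_pair_linear[OF U fsupp_ket fsupp_superpos[OF insert(1)]])
  finally show ?case using insert by simp
qed

lemma unitary_pair_superpos_ket:
  "unitary_pair U Ud \<Longrightarrow> finite I \<Longrightarrow> (\<And>t. t \<in> I \<Longrightarrow> U (ket (c t)) = ket (e t)) \<Longrightarrow>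
   U (superpos I f c) = superpos I f e"
  by (subst unitary_pair_superpos) (simp_all add: superpos_def)

lemma unitary_pair_superpos_superpos:
  assumes "unitary_pair U Ud" "finite I" "\<And>t. t \<in> I \<Longrightarrow> finite (J t)"
    and "\<And>t. t \<in> I \<Longrightarrow> U (ket (c t)) = superpos (J t) (h t) (e t)"
  shows "U (superpos I f c) = superpos (Sigma I J) (\<lambda>(t, s). f t * h t s) (\<lambda>(t, s). e t s)"
  using assms
  by (subst unitary_pair_superpos)
    (simp_all add: superpos_def sum_distrib_left mult.assoc sum.Sigma case_prod_beta')

lemma unitary_pair_adjoint_apply:
  assumes "unitary_pair U Ud" "fsupp w"
  shows "Ud w c = braket (U (ket c)) w"
proof -
  have "Ud w c = braket (ket c) (Ud w)" by (simp add: braket_ket)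
  also have "\<dots> = braket (U (ket c)) (U (Ud w))"
    using unitary_pair_braket[OF assms(1) fsupp_ket unitary_pairD(2)[OF assms]] by simp
  finally show ?thesis using unitary_pairD(4)[OF assms] by simp
qed

section \<open>Rounding of the sampled magnitudes\<close>

lemma cnt_eq_nat_floor:
  assumes "g > 0" "0 \<le> a" "a \<le> g"
  shows "cnt M g a = nat \<lfloor>real M * a / g\<rfloor>"
proof -
  define x where "x = real M * a / g"
  define n where "n = nat \<lfloor>x\<rfloor>"
  have x_nonneg: "0 \<le> x" using assms by (simp add: x_def)
  have le_n: "real m * g \<le> real M * a \<longleftrightarrow> m \<le> n" for m :: nat
  proof -
    have "real m * g \<le> real M * a \<longleftrightarrow> real m \<le> x"
      using assms(1) by (simp add: x_def pos_le_divide_eq)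
    also have "\<dots> \<longleftrightarrow> m \<le> n"
      unfolding n_def using x_nonneg
      by (meson le_nat_floor of_nat_floor of_nat_le_iff order.trans)
    finally show ?thesis .
  qed
  have "x \<le> real M"
    using assms by (simp add: x_def pos_divide_le_eq mult_left_mono)
  then have "n \<le> M"
    using of_nat_floor[OF x_nonneg] unfolding n_def by linarith
  have "{m \<in> {1..M}. real m * g \<le> real M * a} = {m \<in> {1..M}. m \<le> n}"
    by (simp only: le_n)
  also have "\<dots> = {1..n}"
    using \<open>n \<le> M\<close> by auto
  finally show ?thesis by (simp add: cnt_def n_def x_def)
qed

lemma cnt_rounding_error:
  assumes "M > 0" "0 \<le> a" "a \<le> g"
  shows "\<bar>g * real (cnt M g a) / real M - a\<bar> \<le> g / real M"
proof (cases "g = 0")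
  case True
  then show ?thesis using assms by simp
next
  case False
  then have g_pos: "g > 0" using assms by simp
  define x where "x = real M * a / g"
  have x_nonneg: "0 \<le> x" using assms g_pos by (simp add: x_def)
  have "real (cnt M g a) \<le> x" "x < real (cnt M g a) + 1"
    using cnt_eq_nat_floor[OF g_pos assms(2,3)] x_nonneg
    by (simp_all add: x_def[symmetric] of_nat_floor)
  then have "g * real (cnt M g a) \<le> real M * a" "real M * a < g * (real (cnt M g a) + 1)"
    using g_pos by (simp_all add: x_def field_simps)
  then have "g * real (cnt M g a) / real M \<le> a" "a \<le> g * real (cnt M g a) / real M + g / real M"
    using assms(1) by (simp_all add: field_simps)
  then show ?thesis by (simp add: abs_le_iff)
qed

lemma Atilde_error:
  assumes "M > 0"
    and polar: "A i j = complex_of_real (cmod (A i j)) * exp (\<i> * complex_of_real (\<phi> i j))"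
    and bound: "cmod (A i j) \<le> g (kidx S \<nu> i j)"
  shows "cmod (Atilde \<nu> S g A \<phi> M i j - A i j) \<le> g (kidx S \<nu> i j) / real M"
proof -
  define gk where "gk = g (kidx S \<nu> i j)"
  define r where "r = gk * real (cnt M gk (cmod (A i j))) / real M"
  define E where "E = exp (\<i> * complex_of_real (\<phi> i j))"
  have "Atilde \<nu> S g A \<phi> M i j - A i j = E * complex_of_real r - complex_of_real (cmod (A i j)) * E"
    using polar by (simp add: Atilde_def gk_def r_def E_def)
  also have "\<dots> = E * complex_of_real (r - cmod (A i j))"
    by (simp add: algebra_simps)
  finally have "cmod (Atilde \<nu> S g A \<phi> M i j - A i j) = \<bar>r - cmod (A i j)\<bar>"
    by (simp add: norm_mult E_def flip: of_real_diff)
  also have "\<dots> \<le> gk / real M"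
    unfolding r_def using assms(1) bound by (intro cnt_rounding_error) (simp_all add: gk_def)
  finally show ?thesis by (simp add: gk_def)
qed

section \<open>Partitions of the index grid\<close>

locale label_partition =
  fixes N \<nu> :: nat and S :: "nat \<Rightarrow> (nat \<times> nat) set"
  assumes S_sub: "\<forall>k\<in>{1..\<nu>}. S k \<subseteq> {1..N} \<times> {1..N}"
    and S_disj: "\<forall>k\<in>{1..\<nu>}. \<forall>k'\<in>{1..\<nu>}. k \<noteq> k' \<longrightarrow> S k \<inter> S k' = {}"
    and S_union: "(\<Union>k\<in>{1..\<nu>}. S k) = {1..N} \<times> {1..N}"
begin

lemma kidx_eqI: "k \<in> {1..\<nu>} \<Longrightarrow> (i, j) \<in> S k \<Longrightarrow> kidx S \<nu> i j = k"
  unfolding kidx_def by (rule the_equality) (use S_disj in blast)+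

lemma kidx_mem:
  assumes "i \<in> {1..N}" "j \<in> {1..N}"
  shows "kidx S \<nu> i j \<in> {1..\<nu>}" "(i, j) \<in> S (kidx S \<nu> i j)"
proof -
  obtain k where "k \<in> {1..\<nu>}" "(i, j) \<in> S k"
    using assms S_union by blast
  then show "kidx S \<nu> i j \<in> {1..\<nu>}" "(i, j) \<in> S (kidx S \<nu> i j)"
    by (simp_all add: kidx_eqI)
qed

lemma S_memD: "k \<in> {1..\<nu>} \<Longrightarrow> (i, j) \<in> S k \<Longrightarrow> i \<in> {1..N} \<and> j \<in> {1..N}"
  using S_sub by blast

lemma finite_row: "k \<in> {1..\<nu>} \<Longrightarrow> finite {j. (i, j) \<in> S k}"
  by (rule finite_subset[of _ "{1..N}"]) (use S_memD in blast, simp)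

lemma finite_column: "k \<in> {1..\<nu>} \<Longrightarrow> finite {i. (i, j) \<in> S k}"
  by (rule finite_subset[of _ "{1..N}"]) (use S_memD in blast, simp)

lemma finite_column_terms: "finite (SIGMA k:{1..\<nu>}. {i. (i, j) \<in> S k})"
  using finite_column by blast

lemma finite_row_terms: "finite (SIGMA k:{1..\<nu>}. {j. (i, j) \<in> S k})"
  using finite_row by blast

lemma sum_row_terms:
  assumes "i \<in> {1..N}"
  shows "(\<Sum>(k, j)\<in>(SIGMA k:{1..\<nu>}. {j. (i, j) \<in> S k}). F k j) = (\<Sum>j=1..N. F (kidx S \<nu> i j) j)"
proof -
  have "Sigma {1..\<nu>} (\<lambda>k. {j. (i, j) \<in> S k}) = (\<lambda>j. (kidx S \<nu> i j, j)) ` {1..N}"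
  proof (intro set_eqI iffI)
    fix p assume "p \<in> Sigma {1..\<nu>} (\<lambda>k. {j. (i, j) \<in> S k})"
    then obtain k j where p: "p = (k, j)" and k: "k \<in> {1..\<nu>}" and ij: "(i, j) \<in> S k"
      by blast
    then have "j \<in> {1..N}" using S_memD by blast
    moreover have "p = (kidx S \<nu> i j, j)" using p kidx_eqI[OF k ij] by simp
    ultimately show "p \<in> (\<lambda>j. (kidx S \<nu> i j, j)) ` {1..N}" by blast
  next
    fix p assume "p \<in> (\<lambda>j. (kidx S \<nu> i j, j)) ` {1..N}"
    then obtain j where "j \<in> {1..N}" "p = (kidx S \<nu> i j, j)" by blast
    then show "p \<in> Sigma {1..\<nu>} (\<lambda>k. {j. (i, j) \<in> S k})"
      using kidx_mem[OF assms] by simp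
  qed
  moreover have "inj_on (\<lambda>j. (kidx S \<nu> i j, j)) {1..N}"
    by (rule inj_onI) simp
  ultimately show ?thesis
    by (simp only: sum.reindex) simp
qed

end

section \<open>The circuit\<close>

locale zigzag_circuit = label_partition N \<nu> S
  for N \<nu> :: nat and S :: "nat \<Rightarrow> (nat \<times> nat) set" +
  fixes M :: nat and A :: "nat \<Rightarrow> nat \<Rightarrow> complex" and \<phi> :: "nat \<Rightarrow> nat \<Rightarrow> real"
    and d d' :: "nat \<Rightarrow> nat" and g :: "nat \<Rightarrow> real" and \<alpha> :: real
    and Pchi USP UG UA Comp UAd UGd USPd Pphi Pphid :: "qstate \<Rightarrow> qstate"
    and \<psi> :: "nat \<Rightarrow> complex"
  assumes M_pos: "M > 0"
    and d_pos: "\<forall>k\<in>{1..\<nu>}. d k > 0 \<and> d' k > 0"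
    and g_nonneg: "\<forall>k\<in>{1..\<nu>}. g k \<ge> 0"
    and alpha_pos: "\<alpha> > 0"
    and Pchi_unitary: "unitary_op Pchi"
    and Pchi_spec: "\<forall>c. regK c = 0 \<longrightarrow> regR1 c = 0 \<longrightarrow> regR2 c \<in> {1..N} \<longrightarrow>
        Pchi (ket c) = (\<lambda>x. \<Sum>k\<in>{1..\<nu>}. \<Sum>i\<in>{i. (i, regR2 c) \<in> S k}.
           complex_of_real ((real (d' k) / real (d k)) powr (1/4) * sqrt (g k) / sqrt \<alpha>)
           * ket (c\<lparr>regK := k, regR1 := i\<rparr>) x)"
    and Pphi_unitary: "unitary_pair Pphi Pphid" and Pphi_ctrl: "acts_on_K_R1 Pphi"
    and Pphi_spec: "\<forall>c. regK c = 0 \<longrightarrow> regR1 c = 0 \<longrightarrow> regR2 c \<in> {1..N} \<longrightarrow>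
        Pphi (ket c) = (\<lambda>x. \<Sum>k\<in>{1..\<nu>}. \<Sum>j\<in>{j. (regR2 c, j) \<in> S k}.
           complex_of_real ((real (d k) / real (d' k)) powr (1/4) * sqrt (g k) / sqrt \<alpha>)
           * ket (c\<lparr>regK := k, regR1 := j\<rparr>) x)"
    and USP_unitary: "unitary_pair USP USPd"
    and USP_spec: "\<forall>c. regSm c = 0 \<longrightarrow>
        USP (ket c) = (\<lambda>x. \<Sum>m=1..M. ket (c\<lparr>regSm := m\<rparr>) x / complex_of_real (sqrt (real M)))"
    and UA_unitary: "unitary_pair UA UAd"
    and UA_spec: "\<forall>c. regVA c = 0 \<longrightarrow> regR1 c \<in> {1..N} \<longrightarrow> regR2 c \<in> {1..N} \<longrightarrow>
        UA (ket c) = ket (c\<lparr>regVA := cmod (A (regR1 c) (regR2 c))\<rparr>)"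
    and UG_unitary: "unitary_pair UG UGd"
    and UG_spec: "\<forall>c. regVG c = 0 \<longrightarrow> regK c \<in> {1..\<nu>} \<longrightarrow>
        UG (ket c) = ket (c\<lparr>regVG := g (regK c)\<rparr>)"
    and Comp_unitary: "unitary_op Comp"
    and Comp_spec: "\<forall>c. regF c = False \<longrightarrow>
        Comp (ket c) = ket (c\<lparr>regF := \<not> (real M * regVA c \<ge> regVG c * real (regSm c))\<rparr>)"
    and psi_supp: "\<forall>j. j \<notin> {1..N} \<longrightarrow> \<psi> j = 0"
begin

abbreviation sqrt_M :: complex where
  "sqrt_M \<equiv> complex_of_real (sqrt (real M))"

definition chi_coeff :: "nat \<Rightarrow> complex" where
  "chi_coeff k = complex_of_real ((real (d' k) / real (d k)) powr (1/4) * sqrt (g k) / sqrt \<alpha>)"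

definition phi_coeff :: "nat \<Rightarrow> complex" where
  "phi_coeff k = complex_of_real ((real (d k) / real (d' k)) powr (1/4) * sqrt (g k) / sqrt \<alpha>)"

lemma phi_coeff_times_chi_coeff:
  assumes "k \<in> {1..\<nu>}"
  shows "phi_coeff k * chi_coeff k = complex_of_real (g k / \<alpha>)"
proof -
  have "(real (d k) / real (d' k)) powr (1/4) * (real (d' k) / real (d k)) powr (1/4) = 1"
    using d_pos assms by (simp flip: powr_mult)
  moreover have "sqrt (g k) * sqrt (g k) = g k" and "sqrt \<alpha> * sqrt \<alpha> = \<alpha>"
    using g_nonneg assms alpha_pos by simp_all
  ultimately show ?thesis
    unfolding phi_coeff_def chi_coeff_def
    by (simp flip: of_real_mult add: field_simps)
qed

lemma sqrt_M_squared: "sqrt_M * sqrt_M = of_nat M"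
  by (simp flip: of_real_mult)

lemma UG_ket: "k \<in> {1..\<nu>} \<Longrightarrow> UG (ket (conf F m va 0 k r1 r2)) = ket (conf F m va (g k) k r1 r2)"
  using UG_spec by simp

lemma UA_ket:
  "i \<in> {1..N} \<Longrightarrow> j \<in> {1..N} \<Longrightarrow>
   UA (ket (conf F m 0 vg k i j)) = ket (conf F m (cmod (A i j)) vg k i j)"
  using UA_spec by simp

lemma Comp_ket:
  "Comp (ket (conf False m va vg k i j)) = ket (conf (\<not> real M * va \<ge> vg * real m) m va vg k i j)"
  using Comp_spec by simp

definition chi_terms :: "(nat \<times> nat \<times> nat) set" where
  "chi_terms = (SIGMA j:{1..N}. SIGMA k:{1..\<nu>}. {i. (i, j) \<in> S k})"

definition branches :: "((nat \<times> nat \<times> nat) \<times> nat) set" where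
  "branches = chi_terms \<times> {1..M}"

lemma finite_chi_terms: "finite chi_terms"
  unfolding chi_terms_def using finite_column_terms by blast

lemma finite_branches: "finite branches"
  unfolding branches_def using finite_chi_terms by blast

lemma mem_branches:
  "((j, k, i), m) \<in> branches \<longleftrightarrow> j \<in> {1..N} \<and> k \<in> {1..\<nu>} \<and> (i, j) \<in> S k \<and> m \<in> {1..M}"
  by (auto simp: branches_def chi_terms_def)

lemma branchesE:
  assumes "t \<in> branches"
  obtains j k i m where "t = ((j, k, i), m)" "j \<in> {1..N}" "k \<in> {1..\<nu>}" "(i, j) \<in> S k"
    "i \<in> {1..N}" "m \<in> {1..M}"
proof -
  obtain j k i m where t: "t = ((j, k, i), m)" by (metis prod.exhaust)
  with assms have "j \<in> {1..N}" "k \<in> {1..\<nu>}" "(i, j) \<in> S k" "m \<in> {1..M}"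
    by (simp_all only: mem_branches)
  moreover have "i \<in> {1..N}" using S_memD calculation(2,3) by blast
  ultimately show thesis using that t by blast
qed

lemma input_state_superpos: "input_state \<psi> = superpos {1..N} \<psi> anc0"
proof
  fix x
  show "input_state \<psi> x = superpos {1..N} \<psi> anc0 x"
  proof (cases "\<exists>j. x = anc0 j")
    case True
    then obtain j where x: "x = anc0 j" by blast
    then have "{t \<in> {1..N}. anc0 t = x} = (if j \<in> {1..N} then {j} else {})"
      by (auto simp: anc0_def)
    then show ?thesis
      using x psi_supp by (simp add: input_state_def superpos_apply anc0_def)
  next
    case False
    then have "x \<notin> anc0 ` {1..N}" by blast
    with False show ?thesis by (simp add: input_state_def superpos_eq_0)
  qed
qed

lemma Pchi_input:
  "Pchi (input_state \<psi>) =
   superpos chi_terms (\<lambda>(j, k, i). \<psi> j * chi_coeff k) (\<lambda>(j, k, i). conf False 0 0 0 k i j)"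
proof -
  obtain PchiD where U: "unitary_pair Pchi PchiD"
    using Pchi_unitary unfolding unitary_op_def by blast
  have "Pchi (ket (anc0 j)) = superpos (SIGMA k:{1..\<nu>}. {i. (i, j) \<in> S k})
      (\<lambda>(k, i). chi_coeff k) (\<lambda>(k, i). conf False 0 0 0 k i j)" if "j \<in> {1..N}" for j
    using Pchi_spec that finite_column
    by (simp add: anc0_def chi_coeff_def superpos_def sum.Sigma split_beta)
  then show ?thesis
    unfolding input_state_superpos chi_terms_def
    using finite_column_terms
    by (subst unitary_pair_superpos_superpos[OF U]) (auto intro!: superpos_cong)
qed

definition branch_amp :: "(nat \<times> nat \<times> nat) \<times> nat \<Rightarrow> complex" where
  "branch_amp = (\<lambda>((j, k, i), m). \<psi> j * chi_coeff k / sqrt_M)"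

definition branch_phase :: "(nat \<times> nat \<times> nat) \<times> nat \<Rightarrow> complex" where
  "branch_phase = (\<lambda>((j, k, i), m). exp (\<i> * complex_of_real (\<phi> i j)))"

definition rejected :: "(nat \<times> nat \<times> nat) \<times> nat \<Rightarrow> bool" where
  "rejected = (\<lambda>((j, k, i), m). \<not> real M * cmod (A i j) \<ge> g k * real m)"

definition blank_conf :: "bool \<Rightarrow> (nat \<times> nat \<times> nat) \<times> nat \<Rightarrow> cfg" where
  "blank_conf F = (\<lambda>((j, k, i), m). conf F m 0 0 k i j)"

definition value_conf :: "bool \<Rightarrow> (nat \<times> nat \<times> nat) \<times> nat \<Rightarrow> cfg" where
  "value_conf F = (\<lambda>((j, k, i), m). conf F m (cmod (A i j)) (g k) k i j)"

lemma USP_Pchi_input: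
  "USP (Pchi (input_state \<psi>)) = superpos branches branch_amp (blank_conf False)"
proof -
  have "USP (ket ((\<lambda>(j, k, i). conf False 0 0 0 k i j) t)) =
      superpos {1..M} (\<lambda>m. 1 / sqrt_M) (\<lambda>m. blank_conf False (t, m))" for t
    using USP_spec by (simp add: superpos_def blank_conf_def split_beta)
  then have "USP (Pchi (input_state \<psi>)) = superpos (chi_terms \<times> {1..M})
      (\<lambda>(t, m). (\<lambda>(j, k, i). \<psi> j * chi_coeff k) t * (1 / sqrt_M)) (\<lambda>(t, m). blank_conf False (t, m))"
    unfolding Pchi_input
    by (intro unitary_pair_superpos_superpos[OF USP_unitary finite_chi_terms]) simp_all
  also have "\<dots> = superpos branches branch_amp (blank_conf False)"
    unfolding branches_def by (intro superpos_cong) (auto simp: branch_amp_def)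
  finally show ?thesis .
qed

lemma UA_UG_blank:
  "UA (UG (superpos branches f (\<lambda>t. blank_conf (F t) t))) = superpos branches f (\<lambda>t. value_conf (F t) t)"
proof -
  have UG_step: "UG (superpos branches f (\<lambda>t. blank_conf (F t) t)) =
      superpos branches f (\<lambda>t. (value_conf (F t) t)\<lparr>regVA := 0\<rparr>)"
  proof (rule unitary_pair_superpos_ket[OF UG_unitary finite_branches])
    fix t assume "t \<in> branches"
    then obtain j k i m where "t = ((j, k, i), m)" "k \<in> {1..\<nu>}"
      by (rule branchesE)
    then show "UG (ket (blank_conf (F t) t)) = ket ((value_conf (F t) t)\<lparr>regVA := 0\<rparr>)"
      by (simp add: UG_ket blank_conf_def value_conf_def)
  qed
  have UA_step: "UA (superpos branches f (\<lambda>t. (value_conf (F t) t)\<lparr>regVA := 0\<rparr>)) =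
      superpos branches f (\<lambda>t. value_conf (F t) t)"
  proof (rule unitary_pair_superpos_ket[OF UA_unitary finite_branches])
    fix t assume "t \<in> branches"
    then obtain j k i m where "t = ((j, k, i), m)" "i \<in> {1..N}" "j \<in> {1..N}"
      by (rule branchesE)
    then show "UA (ket ((value_conf (F t) t)\<lparr>regVA := 0\<rparr>)) = ket (value_conf (F t) t)"
      by (simp add: UA_ket value_conf_def)
  qed
  show ?thesis by (simp only: UG_step UA_step)
qed

definition uncomputed_state :: qstate where
  "uncomputed_state = superpos branches (\<lambda>t. branch_phase t * branch_amp t) (\<lambda>t. blank_conf (rejected t) t)"

lemma first_half_eq_UA_UG_uncomputed:
  "PHASE \<phi> (Comp (UA (UG (USP (Pchi (input_state \<psi>)))))) = UA (UG uncomputed_state)"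
proof -
  obtain CompD where Comp: "unitary_pair Comp CompD"
    using Comp_unitary unfolding unitary_op_def by blast
  have "Comp (superpos branches branch_amp (value_conf False)) =
      superpos branches branch_amp (\<lambda>t. value_conf (rejected t) t)"
    by (rule unitary_pair_superpos_ket[OF Comp finite_branches])
      (auto simp: Comp_ket value_conf_def rejected_def split: prod.splits)
  moreover have "PHASE \<phi> (superpos branches f (\<lambda>t. value_conf (F t) t)) =
      superpos branches (\<lambda>t. branch_phase t * f t) (\<lambda>t. value_conf (F t) t)" for f F
    unfolding PHASE_superpos
    by (rule superpos_cong) (auto simp: value_conf_def branch_phase_def split: prod.splits)
  ultimately show ?thesis
    using UA_UG_blank[of branch_amp "\<lambda>_. False"] UA_UG_blank[of _ rejected]
    by (simp add: USP_Pchi_input uncomputed_state_def)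
qed

lemma uncompute_eq:
  "UGd (UAd (PHASE \<phi> (Comp (UA (UG (USP (Pchi (input_state \<psi>)))))))) = uncomputed_state"
proof -
  have fsupp: "fsupp uncomputed_state"
    unfolding uncomputed_state_def by (rule fsupp_superpos[OF finite_branches])
  show ?thesis
    unfolding first_half_eq_UA_UG_uncomputed
    by (simp add: unitary_pairD(1,3)[OF UG_unitary fsupp] unitary_pairD(3)[OF UA_unitary])
qed

lemma uncomputed_state_apply:
  "uncomputed_state (conf False m 0 0 k i j) =
   (if ((j, k, i), m) \<in> branches \<and> real m * g k \<le> real M * cmod (A i j)
    then branch_phase ((j, k, i), m) * branch_amp ((j, k, i), m) else 0)"
proof -
  have "{t \<in> branches. blank_conf (rejected t) t = conf False m 0 0 k i j} =
      (if ((j, k, i), m) \<in> branches \<and> real m * g k \<le> real M * cmod (A i j)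
       then {((j, k, i), m)} else {})"
    by (auto simp: blank_conf_def rejected_def mult.commute split: prod.splits)
  then show ?thesis
    by (simp add: uncomputed_state_def superpos_apply finite_branches)
qed

lemma USPd_apply:
  assumes "fsupp w" "regSm x = 0"
  shows "USPd w x = (\<Sum>m=1..M. w (x\<lparr>regSm := m\<rparr>)) / sqrt_M"
proof -
  have "USP (ket x) = superpos {1..M} (\<lambda>m. 1 / sqrt_M) (\<lambda>m. x\<lparr>regSm := m\<rparr>)"
    using USP_spec assms(2) by (simp add: superpos_def)
  then show ?thesis
    using unitary_pair_adjoint_apply[OF USP_unitary assms(1)]
    by (simp add: braket_superpos sum_divide_distrib)
qed

lemma fsupp_SWAP_uncomputed: "fsupp (SWAP uncomputed_state)"
  unfolding uncomputed_state_def by (intro fsupp_SWAP fsupp_superpos finite_branches)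

lemma USPd_SWAP_uncomputed_apply:
  "USPd (SWAP uncomputed_state) (conf False 0 0 0 k j i) =
   (\<Sum>m=1..M. uncomputed_state (conf False m 0 0 k i j)) / sqrt_M"
  by (simp add: USPd_apply fsupp_SWAP_uncomputed SWAP_apply swap_regs_def)

lemma output_amplitude_outside:
  assumes "i \<notin> {1..N}"
  shows "Pphid (USPd (SWAP uncomputed_state)) (anc0 i) = 0"
proof -
  \<comment> \<open>PREP_phi keeps R_2 = i, while the swapped state carries a row index of A in R_2.\<close>
  have "USPd (SWAP uncomputed_state) x = 0" if "Pphi (ket (anc0 i)) x \<noteq> 0" for x
  proof -
    have "x = (anc0 i)\<lparr>regK := regK x, regR1 := regR1 x\<rparr>"
      using that Pphi_ctrl unfolding acts_on_K_R1_def by blast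
    then have "x = conf False 0 0 0 (regK x) (regR1 x) i" by (simp add: anc0_def)
    moreover have "((regR1 x, regK x, i), m) \<notin> branches" for m
      using assms by (auto elim: branchesE)
    ultimately show ?thesis
      by (metis (no_types, lifting) USPd_SWAP_uncomputed_apply uncomputed_state_apply sum.neutral
          div_0)
  qed
  then show ?thesis
    by (simp add: unitary_pair_adjoint_apply[OF Pphi_unitary] fsupp_SWAP_uncomputed
        unitary_pairD(2)[OF USP_unitary] braket_def)
qed

lemma phi_coeff_times_USPd_SWAP_uncomputed:
  assumes "k \<in> {1..\<nu>}" "(i, j) \<in> S k"
  shows "phi_coeff k * USPd (SWAP uncomputed_state) (conf False 0 0 0 k j i) =
         Atilde \<nu> S g A \<phi> M i j * \<psi> j / complex_of_real \<alpha>"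
proof -
  have j: "j \<in> {1..N}" using S_memD assms by blast
  define c where "c = exp (\<i> * complex_of_real (\<phi> i j)) * (\<psi> j * chi_coeff k / sqrt_M)"
  have "(\<Sum>m=1..M. uncomputed_state (conf False m 0 0 k i j)) =
      (\<Sum>m\<in>{1..M}. if real m * g k \<le> real M * cmod (A i j) then c else 0)"
    using assms j
    by (intro sum.cong) (auto simp: uncomputed_state_apply mem_branches c_def branch_phase_def
        branch_amp_def)
  also have "\<dots> = of_nat (cnt M (g k) (cmod (A i j))) * c"
    by (simp add: sum.If_cases cnt_def Int_def)
  finally have "phi_coeff k * USPd (SWAP uncomputed_state) (conf False 0 0 0 k j i) =
      of_nat (cnt M (g k) (cmod (A i j))) * exp (\<i> * complex_of_real (\<phi> i j)) * \<psi> j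
      * (phi_coeff k * chi_coeff k) / (sqrt_M * sqrt_M)"
    by (simp add: USPd_SWAP_uncomputed_apply c_def field_simps)
  also have "\<dots> = of_nat (cnt M (g k) (cmod (A i j))) * exp (\<i> * complex_of_real (\<phi> i j)) * \<psi> j
      * complex_of_real (g k / \<alpha>) / of_nat M"
    by (simp only: phi_coeff_times_chi_coeff[OF assms(1)] sqrt_M_squared)
  also have "\<dots> = Atilde \<nu> S g A \<phi> M i j * \<psi> j / complex_of_real \<alpha>"
    using M_pos alpha_pos by (simp add: Atilde_def kidx_eqI[OF assms] field_simps)
  finally show ?thesis .
qed

lemma output_amplitude_inside:
  assumes "i \<in> {1..N}"
  shows "Pphid (USPd (SWAP uncomputed_state)) (anc0 i) =
         (\<Sum>j=1..N. Atilde \<nu> S g A \<phi> M i j * \<psi> j) / complex_of_real \<alpha>"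
proof -
  have "Pphi (ket (anc0 i)) = superpos (SIGMA k:{1..\<nu>}. {j. (i, j) \<in> S k})
      (\<lambda>(k, j). phi_coeff k) (\<lambda>(k, j). conf False 0 0 0 k j i)"
    using Pphi_spec assms finite_row
    by (simp add: anc0_def phi_coeff_def superpos_def sum.Sigma split_beta)
  then have "Pphid (USPd (SWAP uncomputed_state)) (anc0 i) =
      (\<Sum>(k, j)\<in>(SIGMA k:{1..\<nu>}. {j. (i, j) \<in> S k}).
         cnj (phi_coeff k) * USPd (SWAP uncomputed_state) (conf False 0 0 0 k j i))"
    by (simp only: unitary_pair_adjoint_apply[OF Pphi_unitary]
        unitary_pairD(2)[OF USP_unitary fsupp_SWAP_uncomputed]
        braket_superpos[OF finite_row_terms] split_def)
  also have "\<dots> = (\<Sum>(k, j)\<in>(SIGMA k:{1..\<nu>}. {j. (i, j) \<in> S k}).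
         phi_coeff k * USPd (SWAP uncomputed_state) (conf False 0 0 0 k j i))"
    by (simp add: phi_coeff_def)
  also have "\<dots> = (\<Sum>(k, j)\<in>(SIGMA k:{1..\<nu>}. {j. (i, j) \<in> S k}).
         Atilde \<nu> S g A \<phi> M i j * \<psi> j / complex_of_real \<alpha>)"
    by (intro sum.cong) (auto simp: phi_coeff_times_USPd_SWAP_uncomputed)
  also have "\<dots> = (\<Sum>j=1..N. Atilde \<nu> S g A \<phi> M i j * \<psi> j) / complex_of_real \<alpha>"
    using sum_row_terms[OF assms, of "\<lambda>_ j. Atilde \<nu> S g A \<phi> M i j * \<psi> j / complex_of_real \<alpha>"]
    by (simp add: sum_divide_distrib)
  finally show ?thesis .
qed

end

theorem corollary5p8:
  fixes N \<nu> M :: nat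
    and A :: "nat \<Rightarrow> nat \<Rightarrow> complex" and \<phi> :: "nat \<Rightarrow> nat \<Rightarrow> real"
    and S :: "nat \<Rightarrow> (nat \<times> nat) set"
    and d d' :: "nat \<Rightarrow> nat" and g :: "nat \<Rightarrow> real" and \<alpha> :: real
    and Pchi USP UG UA Comp UAd UGd USPd Pphi Pphid :: "qstate \<Rightarrow> qstate"
    and \<psi> :: "nat \<Rightarrow> complex"
  assumes N_pos: "N > 0" and nu_pos: "\<nu> > 0" and M_pos: "M > 0"
    and A_polar: "\<forall>i\<in>{1..N}. \<forall>j\<in>{1..N}.
                    A i j = complex_of_real (cmod (A i j)) * exp (\<i> * complex_of_real (\<phi> i j))"
    and S_sub: "\<forall>k\<in>{1..\<nu>}. S k \<subseteq> {1..N} \<times> {1..N}"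
    and S_disj: "\<forall>k\<in>{1..\<nu>}. \<forall>k'\<in>{1..\<nu>}. k \<noteq> k' \<longrightarrow> S k \<inter> S k' = {}"
    and S_union: "(\<Union>k\<in>{1..\<nu>}. S k) = {1..N} \<times> {1..N}"
    and d_pos: "\<forall>k\<in>{1..\<nu>}. d k > 0 \<and> d' k > 0"
    and d_col: "\<forall>k\<in>{1..\<nu>}. \<forall>j\<in>{1..N}. card {i. (i, j) \<in> S k} = d k"
    and d_row: "\<forall>k\<in>{1..\<nu>}. \<forall>i\<in>{1..N}. card {j. (i, j) \<in> S k} = d' k"
    and g_nonneg: "\<forall>k\<in>{1..\<nu>}. g k \<ge> 0"
    and g_bound: "\<forall>k\<in>{1..\<nu>}. \<forall>(i, j)\<in>S k. cmod (A i j) \<le> g k"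
    and alpha_def: "\<alpha> = (\<Sum>k=1..\<nu>. sqrt (real (d k * d' k)) * g k)"
    and alpha_pos: "\<alpha> > 0"
    \<comment> \<open>PREP_chi\<close>
    and Pchi_unitary: "unitary_op Pchi" and Pchi_ctrl: "acts_on_K_R1 Pchi"
    and Pchi_spec: "\<forall>c. regK c = 0 \<longrightarrow> regR1 c = 0 \<longrightarrow> regR2 c \<in> {1..N} \<longrightarrow>
        Pchi (ket c) = (\<lambda>x. \<Sum>k\<in>{1..\<nu>}. \<Sum>i\<in>{i. (i, regR2 c) \<in> S k}.
           complex_of_real ((real (d' k) / real (d k)) powr (1/4) * sqrt (g k) / sqrt \<alpha>)
           * ket (c\<lparr>regK := k, regR1 := i\<rparr>) x)"
    \<comment> \<open>PREP_phi (with adjoint Pphid)\<close>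
    and Pphi_unitary: "unitary_pair Pphi Pphid" and Pphi_ctrl: "acts_on_K_R1 Pphi"
    and Pphi_spec: "\<forall>c. regK c = 0 \<longrightarrow> regR1 c = 0 \<longrightarrow> regR2 c \<in> {1..N} \<longrightarrow>
        Pphi (ket c) = (\<lambda>x. \<Sum>k\<in>{1..\<nu>}. \<Sum>j\<in>{j. (regR2 c, j) \<in> S k}.
           complex_of_real ((real (d k) / real (d' k)) powr (1/4) * sqrt (g k) / sqrt \<alpha>)
           * ket (c\<lparr>regK := k, regR1 := j\<rparr>) x)"
    \<comment> \<open>USP_M (with adjoint USPd)\<close>
    and USP_unitary: "unitary_pair USP USPd"
    and USP_spec: "\<forall>c. regSm c = 0 \<longrightarrow>
        USP (ket c) = (\<lambda>x. \<Sum>m=1..M. ket (c\<lparr>regSm := m\<rparr>) x / complex_of_real (sqrt (real M)))"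
    \<comment> \<open>U_A (with adjoint UAd)\<close>
    and UA_unitary: "unitary_pair UA UAd"
    and UA_spec: "\<forall>c. regVA c = 0 \<longrightarrow> regR1 c \<in> {1..N} \<longrightarrow> regR2 c \<in> {1..N} \<longrightarrow>
        UA (ket c) = ket (c\<lparr>regVA := cmod (A (regR1 c) (regR2 c))\<rparr>)"
    \<comment> \<open>U_G (with adjoint UGd)\<close>
    and UG_unitary: "unitary_pair UG UGd"
    and UG_spec: "\<forall>c. regVG c = 0 \<longrightarrow> regK c \<in> {1..\<nu>} \<longrightarrow>
        UG (ket c) = ket (c\<lparr>regVG := g (regK c)\<rparr>)"
    \<comment> \<open>Comp\<close>
    and Comp_unitary: "unitary_op Comp"
    and Comp_spec: "\<forall>c. regF c = False \<longrightarrow>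
        Comp (ket c) = ket (c\<lparr>regF := \<not> (real M * regVA c \<ge> regVG c * real (regSm c))\<rparr>)"
    \<comment> \<open>the input |Psi> = sum_{j=1..N} psi_j |j>\<close>
    and psi_supp: "\<forall>j. j \<notin> {1..N} \<longrightarrow> \<psi> j = 0"
  shows "(\<forall>i. (Pphid (USPd (SWAP (UGd (UAd (PHASE \<phi> (Comp (UA (UG (USP (Pchi
              (input_state \<psi>)))))))))))) (anc0 i)
            = (if i \<in> {1..N}
               then (\<Sum>j=1..N. Atilde \<nu> S g A \<phi> M i j * \<psi> j) / complex_of_real \<alpha>
               else 0))
       \<and> (\<forall>i\<in>{1..N}. \<forall>j\<in>{1..N}.
            cmod (Atilde \<nu> S g A \<phi> M i j - A i j) \<le> g (kidx S \<nu> i j) / real M)"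
proof -
  interpret zigzag_circuit N \<nu> S M A \<phi> d d' g \<alpha> Pchi USP UG UA Comp UAd UGd USPd Pphi Pphid \<psi>
    by unfold_locales (fact assms)+
  have "Pphid (USPd (SWAP (UGd (UAd (PHASE \<phi> (Comp (UA (UG (USP (Pchi (input_state \<psi>))))))))))) (anc0 i)
        = (if i \<in> {1..N} then (\<Sum>j=1..N. Atilde \<nu> S g A \<phi> M i j * \<psi> j) / complex_of_real \<alpha>
           else 0)" for i
    unfolding uncompute_eq by (simp add: output_amplitude_inside output_amplitude_outside)
  moreover have "cmod (Atilde \<nu> S g A \<phi> M i j - A i j) \<le> g (kidx S \<nu> i j) / real M"
    if "i \<in> {1..N}" "j \<in> {1..N}" for i j
    using Atilde_error[OF M_pos] A_polar g_bound kidx_mem[OF that] that by blast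
  ultimately show ?thesis by blast
qed

end
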